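(* Let $p$ be a prime and let $A\subseteq\mathbb{Z}_p^2$ with $|A|=p-1+\mathrm{Ol}(\mathbb{Z}_p)$. Let $U\le\mathbb{Z}_p^2$ be a subgroup with $U\cong\mathbb{Z}_p$, let $B\subseteq A$, let $\pi:\mathbb{Z}_p^2\to\mathbb{Z}_p$ be a surjective homomorphism with kernel $U$, and let $x_1,\dots,x_p$ be representatives of the cosets of $U$ in $\mathbb{Z}_p^2$. For $x\in\mathbb{Z}_p^2$ and a set $C$ write $N(x,U,C)=|C\cap(x+U)|$. Suppose that every element of $\mathbb{Z}_p$ is the sum of some (possibly empty) sub-multiset of the multiset $\pi(B)=\{\pi(b):b\in B\}$, and that \[ \sum_{i=1}^{p}\left\lfloor \frac{N(x_i,U,A\setminus B)}{2}\right\rfloor\left\lceil \frac{N(x_i,U,A\setminus B)}{2}\right\rceil\geq p+1. \] Then $A$ contains a non-empty subset whose sum is $0$.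
   Context: $\mathrm{Ol}(\mathbb{Z}_p)$ denotes the smallest integer $k$ such that every set of $k$ distinct elements of $\mathbb{Z}_p$ contains a non-empty subset with sum $0$. *)

theory Defs
  imports Main "HOL-Computational_Algebra.Primes"
begin

text \<open>Z_p is modelled by the integers {0..<p} with addition mod p;
  Z_p^2 by pairs of such integers with componentwise addition mod p.\<close>

definition Zp :: "int \<Rightarrow> int set" where
  "Zp p = {0..<p}"

definition Zp2 :: "int \<Rightarrow> (int \<times> int) set" where
  "Zp2 p = Zp p \<times> Zp p"

definition addp :: "int \<Rightarrow> int \<Rightarrow> int \<Rightarrow> int" where
  "addp p a b = (a + b) mod p"

definition add2 :: "int \<Rightarrow> int \<times> int \<Rightarrow> int \<times> int \<Rightarrow> int \<times> int" where
  "add2 p x y = ((fst x + fst y) mod p, (snd x + snd y) mod p)"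

definition neg2 :: "int \<Rightarrow> int \<times> int \<Rightarrow> int \<times> int" where
  "neg2 p x = ((- fst x) mod p, (- snd x) mod p)"

definition sum2 :: "int \<Rightarrow> (int \<times> int) set \<Rightarrow> int \<times> int" where
  "sum2 p T = ((\<Sum>t\<in>T. fst t) mod p, (\<Sum>t\<in>T. snd t) mod p)"

definition Ol :: "int \<Rightarrow> nat" where
  "Ol p = (LEAST k. \<forall>S \<subseteq> Zp p. card S = k \<longrightarrow>
              (\<exists>T \<subseteq> S. T \<noteq> {} \<and> (\<Sum>T) mod p = 0))"

definition is_subgroup2 :: "int \<Rightarrow> (int \<times> int) set \<Rightarrow> bool" where
  "is_subgroup2 p U \<longleftrightarrow> U \<subseteq> Zp2 p \<and> (0, 0) \<in> U \<and>
     (\<forall>x\<in>U. \<forall>y\<in>U. add2 p x y \<in> U) \<and> (\<forall>x\<in>U. neg2 p x \<in> U)"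

definition iso_to_Zp :: "int \<Rightarrow> (int \<times> int) set \<Rightarrow> bool" where
  "iso_to_Zp p U \<longleftrightarrow> (\<exists>\<phi>. bij_betw \<phi> (Zp p) U \<and>
     (\<forall>a\<in>Zp p. \<forall>b\<in>Zp p. \<phi> (addp p a b) = add2 p (\<phi> a) (\<phi> b)))"

definition coset2 :: "int \<Rightarrow> int \<times> int \<Rightarrow> (int \<times> int) set \<Rightarrow> (int \<times> int) set" where
  "coset2 p x U = add2 p x ` U"

definition N :: "int \<Rightarrow> int \<times> int \<Rightarrow> (int \<times> int) set \<Rightarrow> (int \<times> int) set \<Rightarrow> nat" where
  "N p x U C = card (C \<inter> coset2 p x U)"

end

theory Submission
  imports Defs "HOL-Computational_Algebra.Polynomial" "HOL-Library.FuncSet"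
    "HOL-Library.Product_Lexorder" "HOL-Number_Theory.Cong"
begin

text \<open>Let \<open>X = A - B\<close> and let \<open>n\<^sub>i\<close> be the number of elements of \<open>X\<close> in the coset
  \<open>x\<^sub>i + U\<close>. Choosing \<open>\<lfloor>n\<^sub>i/2\<rfloor>\<close> of them in every coset puts their sum in a fixed coset
  \<open>c + U\<close>, and a theorem of Dias da Silva--Hamidoune type (proved with the polynomial method of
  Alon, Nathanson and Ruzsa, via the coefficient formula of the Combinatorial Nullstellensatz)
  shows that every element of \<open>c + U\<close> arises once \<open>\<Sum>\<^sub>i \<lfloor>n\<^sub>i/2\<rfloor>\<lceil>n\<^sub>i/2\<rceil> \<ge> p - 1\<close>.
  Since the subset sums of \<open>\<pi>(B)\<close> cover \<open>\<int>\<^sub>p\<close>, some \<open>S \<subseteq> B\<close> has its sum in \<open>-c + U\<close>,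
  and a suitable choice from \<open>X\<close> cancels the remaining \<open>U\<close>-component.\<close>

section \<open>The coefficient formula of the Combinatorial Nullstellensatz\<close>

definition lagrange_denom :: "'a::comm_ring_1 set \<Rightarrow> 'a \<Rightarrow> 'a" where
  "lagrange_denom S t = (\<Prod>b\<in>S-{t}. t - b)"

lemma lagrange_denom_nonzero:
  fixes S :: "'a::idom set"
  shows "finite S \<Longrightarrow> lagrange_denom S t \<noteq> 0"
  unfolding lagrange_denom_def by auto

lemma of_int_lagrange_denom:
  "lagrange_denom (of_int ` S :: 'a::{comm_ring_1,ring_char_0} set) (of_int t) = of_int (lagrange_denom S t)"
proof -
  have "of_int ` S - {of_int t :: 'a} = of_int ` (S - {t})" by auto
  thus ?thesis
    unfolding lagrange_denom_def by (simp add: prod.reindex inj_on_def of_int_prod)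
qed

text \<open>Compare the coefficients of degree \<open>|S| - 1\<close> in the Lagrange interpolation of
  \<open>t ^ d\<close> on the nodes \<open>S\<close>, which is \<open>t ^ d\<close> itself.\<close>
lemma lagrange_power_sum:
  fixes S :: "'a::field set"
  assumes fin: "finite S" and d: "d < card S"
  shows "(\<Sum>t\<in>S. t ^ d / lagrange_denom S t) = (if d = card S - 1 then 1 else 0)"
proof -
  define L where "L t = (\<Prod>b\<in>S-{t}. [:-b, 1:])" for t
  define q where "q = (\<Sum>t\<in>S. smult (t ^ d / lagrange_denom S t) (L t))"
  have deg_L: "degree (L t) = card S - 1" if "t \<in> S" for t
    using fin that by (simp add: L_def degree_prod_eq_sum_degree card_Diff_singleton)
  have lead_L: "coeff (L t) (card S - 1) = 1" if "t \<in> S" for t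
    using lead_coeff_prod[of "\<lambda>b. [:-b, 1:]" "S-{t}"] deg_L[OF that] by (simp add: L_def)
  have deg_q: "degree q \<le> card S - 1"
    unfolding q_def
    by (rule degree_sum_le) (use fin deg_L in \<open>auto intro: order.trans[OF degree_smult_le]\<close>)
  have "poly q x = poly (monom 1 d) x" if "x \<in> S" for x
  proof -
    have "poly q x = (\<Sum>t\<in>S. t ^ d / lagrange_denom S t * (\<Prod>b\<in>S-{t}. x - b))"
      unfolding q_def L_def by (simp add: poly_sum poly_prod)
    also have "\<dots> = (\<Sum>t\<in>{x}. t ^ d / lagrange_denom S t * (\<Prod>b\<in>S-{t}. x - b))"
      using fin that by (intro sum.mono_neutral_right) auto
    also have "\<dots> = x ^ d"
      using lagrange_denom_nonzero[OF fin, of x] by (simp add: lagrange_denom_def)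
    finally show ?thesis by (simp add: poly_monom)
  qed
  hence "q = monom 1 d"
    by (rule poly_eqI_degree) (use deg_q d in \<open>auto simp: degree_monom_eq\<close>)
  moreover have "coeff q (card S - 1) = (\<Sum>t\<in>S. t ^ d / lagrange_denom S t)"
    unfolding q_def using lead_L by (simp add: coeff_sum)
  ultimately show ?thesis by (simp add: coeff_monom)
qed

lemma lagrange_power_sum_int:
  fixes S :: "int set"
  assumes "finite S" "d < card S"
  shows "(\<Sum>t\<in>S. (of_int t :: 'a::field_char_0) ^ d / of_int (lagrange_denom S t))
    = (if d = card S - 1 then 1 else 0)"
  using lagrange_power_sum[of "of_int ` S :: 'a set" d] assms
  by (simp add: sum.reindex inj_on_def card_image of_int_lagrange_denom)

text \<open>A polynomial in the variables \<open>V\<close> is represented by a list of terms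
  (coefficient, exponent vector); only the functions such lists induce are used.\<close>

definition monom_val :: "'v set \<Rightarrow> ('v \<Rightarrow> nat) \<Rightarrow> ('v \<Rightarrow> 'a::comm_ring_1) \<Rightarrow> 'a" where
  "monom_val V u x = (\<Prod>v\<in>V. x v ^ u v)"

definition terms_val :: "'v set \<Rightarrow> ('a \<times> ('v \<Rightarrow> nat)) list \<Rightarrow> ('v \<Rightarrow> 'a::comm_ring_1) \<Rightarrow> 'a" where
  "terms_val V ps x = (\<Sum>(c, u)\<leftarrow>ps. c * monom_val V u x)"

definition monom_degree :: "'v set \<Rightarrow> ('v \<Rightarrow> nat) \<Rightarrow> nat" where
  "monom_degree V u = (\<Sum>v\<in>V. u v)"

definition poly_fun_le :: "'v set \<Rightarrow> nat \<Rightarrow> (('v \<Rightarrow> 'a::comm_ring_1) \<Rightarrow> 'a) \<Rightarrow> bool" where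
  "poly_fun_le V d g \<longleftrightarrow>
     (\<exists>ps. (\<forall>(c, u)\<in>set ps. monom_degree V u \<le> d) \<and> g = terms_val V ps)"

lemma terms_val_append: "terms_val V (ps @ qs) x = terms_val V ps x + terms_val V qs x"
  by (simp add: terms_val_def)

lemma poly_fun_le_const: "poly_fun_le V d (\<lambda>x. c)"
  unfolding poly_fun_le_def
  by (rule exI[of _ "[(c, \<lambda>_. 0)]"]) (simp add: fun_eq_iff terms_val_def monom_val_def monom_degree_def)

lemma poly_fun_le_var:
  fixes V :: "'v set"
  assumes "finite V" "v \<in> V"
  shows "poly_fun_le V 1 (\<lambda>x. x v)"
proof -
  define u where "u = (\<lambda>w. if w = v then 1 else (0::nat))"
  have "monom_val V u x = x v" for x :: "'v \<Rightarrow> 'a"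
    unfolding monom_val_def u_def by (subst prod.remove[OF assms]) auto
  moreover have "monom_degree V u = 1"
    unfolding monom_degree_def u_def by (subst sum.remove[OF assms]) auto
  ultimately show ?thesis
    unfolding poly_fun_le_def by (intro exI[of _ "[(1, u)]"]) (simp add: fun_eq_iff terms_val_def)
qed

lemma poly_fun_le_mono: "poly_fun_le V d g \<Longrightarrow> d \<le> d' \<Longrightarrow> poly_fun_le V d' g"
  unfolding poly_fun_le_def by fastforce

lemma poly_fun_le_add:
  "poly_fun_le V d g \<Longrightarrow> poly_fun_le V d h \<Longrightarrow> poly_fun_le V d (\<lambda>x. g x + h x)"
  unfolding poly_fun_le_def
  by (elim exE conjE, rule_tac x="ps @ psa" in exI) (auto simp: terms_val_append)

lemma poly_fun_le_scale: "poly_fun_le V d g \<Longrightarrow> poly_fun_le V d (\<lambda>x. c * g x)"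
  unfolding poly_fun_le_def
proof (elim exE conjE)
  fix ps assume deg: "\<forall>(c, u)\<in>set ps. monom_degree V u \<le> d" and g: "g = terms_val V ps"
  let ?cps = "map (\<lambda>(c', u). (c * c', u)) ps"
  have "terms_val V ?cps x = c * terms_val V ps x" for x
    by (induction ps) (auto simp: terms_val_def algebra_simps)
  thus "\<exists>ps. (\<forall>(c, u)\<in>set ps. monom_degree V u \<le> d) \<and> (\<lambda>x. c * g x) = terms_val V ps"
    using deg g by (intro exI[of _ ?cps]) auto
qed

lemma poly_fun_le_diff:
  "poly_fun_le V d g \<Longrightarrow> poly_fun_le V d h \<Longrightarrow> poly_fun_le V d (\<lambda>x. g x - h x)"
  using poly_fun_le_add[of V d g "\<lambda>x. (-1) * h x"] poly_fun_le_scale[of V d h "-1"] by simp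

definition terms_mult :: "('a::comm_ring_1 \<times> ('v \<Rightarrow> nat)) list \<Rightarrow> ('a \<times> ('v \<Rightarrow> nat)) list
    \<Rightarrow> ('a \<times> ('v \<Rightarrow> nat)) list" where
  "terms_mult ps qs = concat (map (\<lambda>(c, u). map (\<lambda>(c', u'). (c * c', \<lambda>v. u v + u' v)) qs) ps)"

lemma terms_val_mult: "terms_val V (terms_mult ps qs) x = terms_val V ps x * terms_val V qs x"
proof (induction ps)
  case Nil thus ?case by (simp add: terms_mult_def terms_val_def)
next
  case (Cons cu ps)
  obtain c u where cu: "cu = (c, u)" by fastforce
  have "monom_val V (\<lambda>v. u v + u' v) x = monom_val V u x * monom_val V u' x" for u'
    by (simp add: monom_val_def power_add prod.distrib)
  hence "terms_val V (map (\<lambda>(c', u'). (c * c', \<lambda>v. u v + u' v)) qs) x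
      = c * monom_val V u x * terms_val V qs x"
    by (induction qs) (auto simp: terms_val_def algebra_simps)
  thus ?case
    using Cons by (simp add: terms_mult_def cu terms_val_append) (simp add: terms_val_def algebra_simps)
qed

lemma poly_fun_le_mult:
  "poly_fun_le V d g \<Longrightarrow> poly_fun_le V d' h \<Longrightarrow> poly_fun_le V (d + d') (\<lambda>x. g x * h x)"
  unfolding poly_fun_le_def
proof (elim exE conjE)
  fix ps qs
  assume ps: "\<forall>(c, u)\<in>set ps. monom_degree V u \<le> d" "g = terms_val V ps"
    and qs: "\<forall>(c, u)\<in>set qs. monom_degree V u \<le> d'" "h = terms_val V qs"
  have "\<forall>(c, u)\<in>set (terms_mult ps qs). monom_degree V u \<le> d + d'"
    using ps(1) qs(1) by (fastforce simp: terms_mult_def monom_degree_def sum.distrib)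
  thus "\<exists>rs. (\<forall>(c, u)\<in>set rs. monom_degree V u \<le> d + d') \<and> (\<lambda>x. g x * h x) = terms_val V rs"
    using ps(2) qs(2) by (intro exI[of _ "terms_mult ps qs"]) (auto simp: terms_val_mult)
qed

lemma poly_fun_le_prod:
  "finite F \<Longrightarrow> (\<And>i. i \<in> F \<Longrightarrow> poly_fun_le V (d i) (g i)) \<Longrightarrow>
    poly_fun_le V (\<Sum>i\<in>F. d i) (\<lambda>x. \<Prod>i\<in>F. g i x)"
proof (induction F rule: finite_induct)
  case empty thus ?case using poly_fun_le_const[of V 0 1] by simp
next
  case (insert i F) thus ?case using poly_fun_le_mult[of V "d i" "g i"] by simp
qed

lemma poly_fun_le_sum:
  "finite F \<Longrightarrow> (\<And>i. i \<in> F \<Longrightarrow> poly_fun_le V d (g i)) \<Longrightarrow>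
    poly_fun_le V d (\<lambda>x. \<Sum>i\<in>F. g i x)"
proof (induction F rule: finite_induct)
  case empty thus ?case using poly_fun_le_const[of V d 0] by simp
next
  case (insert i F) thus ?case using poly_fun_le_add[of V d "g i"] by simp
qed

lemma poly_fun_le_poly_comp:
  assumes h: "poly_fun_le V 1 h" and q: "degree q \<le> n"
  shows "poly_fun_le V n (\<lambda>x. poly q (h x))"
proof -
  have "poly q t = (\<Sum>i\<le>n. coeff q i * t ^ i)" for t
    using q by (simp add: poly_altdef) (intro sum.mono_neutral_left, auto simp: coeff_eq_0)
  moreover have "poly_fun_le V i (\<lambda>x. h x ^ i)" for i
    using poly_fun_le_prod[of "{..<i}" V "\<lambda>_. 1" "\<lambda>_. h"] h by simp
  hence "poly_fun_le V n (\<lambda>x. \<Sum>i\<le>n. coeff q i * h x ^ i)"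
    by (intro poly_fun_le_sum poly_fun_le_scale) (auto intro: poly_fun_le_mono)
  ultimately show ?thesis by simp
qed

text \<open>The coefficient formula of the Combinatorial Nullstellensatz: if \<open>|G v| = e v + 1\<close> for
  all \<open>v\<close> and \<open>g\<close> has total degree at most \<open>\<Sum>v. e v\<close>, then \<open>interp_sum V G g\<close> is the
  coefficient of \<open>\<Prod>v. x v ^ e v\<close> in \<open>g\<close>.\<close>

definition interp_sum :: "'v set \<Rightarrow> ('v \<Rightarrow> int set) \<Rightarrow> (('v \<Rightarrow> 'a::field_char_0) \<Rightarrow> 'a) \<Rightarrow> 'a"
  where "interp_sum V G g =
    (\<Sum>a\<in>PiE V G. g (\<lambda>v. of_int (a v)) / of_int (\<Prod>v\<in>V. lagrange_denom (G v) (a v)))"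

lemma interp_sum_diff: "interp_sum V G (\<lambda>x. g x - h x) = interp_sum V G g - interp_sum V G h"
  unfolding interp_sum_def by (simp add: diff_divide_distrib sum_subtractf)

lemma interp_sum_monom:
  fixes V :: "'v set"
  assumes fV: "finite V" and G: "\<And>v. v \<in> V \<Longrightarrow> finite (G v) \<and> card (G v) = Suc (e v)"
    and deg: "monom_degree V u \<le> monom_degree V e"
  shows "interp_sum V G (monom_val V u) = (if \<forall>v\<in>V. u v = e v then 1 else (0::'a::field_char_0))"
proof -
  define coeff1 where
    "coeff1 v = (\<Sum>t\<in>G v. (of_int t :: 'a) ^ u v / of_int (lagrange_denom (G v) t))" for v
  have coeff1: "coeff1 v = (if u v = e v then 1 else 0)" if "v \<in> V" "u v \<le> e v" for v
    unfolding coeff1_def using G[OF that(1)] that(2) by (subst lagrange_power_sum_int) auto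
  have "interp_sum V G (monom_val V u) = (\<Prod>v\<in>V. coeff1 v)"
    unfolding interp_sum_def monom_val_def coeff1_def
    by (simp add: of_int_prod prod_dividef prod_sum_PiE fV G)
  also have "\<dots> = (if \<forall>v\<in>V. u v = e v then 1 else 0)"
  proof (cases "\<forall>v\<in>V. u v \<le> e v")
    case True
    thus ?thesis using fV by (simp add: coeff1 prod_zero_iff cong: prod.cong)
  next
    case False
    then obtain v0 where v0: "v0 \<in> V" "e v0 < u v0" by force
    \<comment> \<open>since the degrees are comparable, some other exponent must fall short\<close>
    obtain v1 where v1: "v1 \<in> V" "u v1 < e v1"
    proof (rule ccontr)
      assume "\<not> thesis"
      hence "\<forall>v\<in>V. e v \<le> u v" using that by force
      hence "monom_degree V e < monom_degree V u"
        unfolding monom_degree_def using v0 fV by (intro sum_strict_mono_ex1) auto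
      thus False using deg by simp
    qed
    thus ?thesis using fV v0 coeff1[of v1] by (auto simp: prod_zero_iff)
  qed
  finally show ?thesis .
qed

lemma interp_sum_terms:
  fixes V :: "'v set" and ps :: "('a::field_char_0 \<times> ('v \<Rightarrow> nat)) list"
  assumes fV: "finite V" and G: "\<And>v. v \<in> V \<Longrightarrow> finite (G v) \<and> card (G v) = Suc (e v)"
    and deg: "\<forall>(c, u)\<in>set ps. monom_degree V u \<le> monom_degree V e"
  shows "interp_sum V G (terms_val V ps) = sum_list (map (\<lambda>(c, u). if \<forall>v\<in>V. u v = e v then c else 0) ps)"
  using deg
proof (induction ps)
  case Nil thus ?case by (simp add: interp_sum_def terms_val_def)
next
  case (Cons cu ps)
  obtain c u where cu: "cu = (c, u)" by fastforce
  have top: "interp_sum V G (monom_val V u) = (if \<forall>v\<in>V. u v = e v then 1 else 0)"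
    using Cons.prems unfolding cu by (intro interp_sum_monom[OF fV G]) auto
  have "interp_sum V G (terms_val V (cu # ps))
      = c * interp_sum V G (monom_val V u) + interp_sum V G (terms_val V ps)"
    unfolding interp_sum_def terms_val_def cu
    by (simp add: add_divide_distrib sum.distrib sum_distrib_left)
  also have "\<dots> = c * (if \<forall>v\<in>V. u v = e v then 1 else 0)
      + sum_list (map (\<lambda>(c, u). if \<forall>v\<in>V. u v = e v then c else 0) ps)"
    using Cons.IH Cons.prems by (simp only: top) (simp add: cu)
  finally show ?case by (simp add: cu)
qed

lemma interp_sum_indep_nodes:
  assumes fV: "finite V"
    and G: "\<And>v. v \<in> V \<Longrightarrow> finite (G v) \<and> card (G v) = Suc (e v)"
    and H: "\<And>v. v \<in> V \<Longrightarrow> finite (H v) \<and> card (H v) = Suc (e v)"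
    and g: "poly_fun_le V (monom_degree V e) g"
  shows "interp_sum V G g = interp_sum V H g"
proof -
  obtain ps where deg: "\<forall>(c, u)\<in>set ps. monom_degree V u \<le> monom_degree V e"
    and g: "g = terms_val V ps"
    using g unfolding poly_fun_le_def by blast
  show ?thesis
    unfolding g using interp_sum_terms[OF fV G deg] interp_sum_terms[OF fV H deg] by simp
qed

lemma interp_sum_low_degree:
  fixes V :: "'v set"
  assumes fV: "finite V" and G: "\<And>v. v \<in> V \<Longrightarrow> finite (G v) \<and> card (G v) = Suc (e v)"
    and g: "poly_fun_le V d g" and d: "d < monom_degree V e"
  shows "interp_sum V G g = 0"
proof -
  obtain ps where deg: "\<forall>(c, u)\<in>set ps. monom_degree V u \<le> d" and g: "g = terms_val V ps"
    using g unfolding poly_fun_le_def by blast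
  have no_top: False if "(c, u) \<in> set ps" "\<forall>v\<in>V. u v = e v" for c u
    using deg that d by (force simp: monom_degree_def)
  have "interp_sum V G g = sum_list (map (\<lambda>(c, u). if \<forall>v\<in>V. u v = e v then c else 0) ps)"
    unfolding g using deg d by (intro interp_sum_terms[OF fV G]) auto
  also have "\<dots> = sum_list (map (\<lambda>_. 0) ps)"
    by (intro arg_cong[of _ _ sum_list] map_cong) (auto dest: no_top)
  also have "\<dots> = 0"
    by (induction ps) auto
  finally show ?thesis .
qed

section \<open>Restricted sums with distinct summands in each block\<close>

lemma prime_not_dvd_prod_small:
  fixes p :: int
  assumes "prime p" "finite F" "\<And>i. i \<in> F \<Longrightarrow> f i \<noteq> 0 \<and> \<bar>f i\<bar> < p"
  shows "\<not> p dvd (\<Prod>i\<in>F. f i)"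
proof -
  have "\<not> p dvd f i" if "i \<in> F" for i
    using assms(3)[OF that] zdvd_not_zless[of "\<bar>f i\<bar>" p] by auto
  thus ?thesis using assms(1,2) by (simp add: prime_dvd_prod_iff)
qed

lemma prime_not_dvd_lagrange_denom:
  fixes p :: int
  assumes "prime p" "S \<subseteq> {0..<p}" "t \<in> {0..<p}"
  shows "\<not> p dvd lagrange_denom S t"
  unfolding lagrange_denom_def
  using assms finite_subset[OF assms(2)]
  by (intro prime_not_dvd_prod_small) (auto simp: abs_if subset_iff)

text \<open>\<open>p_divisible p q\<close>: \<open>q\<close> lies in the ideal \<open>p \<int>\<^sub>(\<^sub>p\<^sub>)\<close> of the
  localisation of \<open>\<int>\<close> at \<open>p\<close>.\<close>

definition p_divisible :: "int \<Rightarrow> 'a::field_char_0 \<Rightarrow> bool" where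
  "p_divisible p q \<longleftrightarrow> (\<exists>M W. \<not> p dvd W \<and> q = of_int (p * M) / of_int W)"

lemma p_divisible_add:
  assumes p: "prime p" and "p_divisible p q" "p_divisible p (r :: 'a::field_char_0)"
  shows "p_divisible p (q + r)"
proof -
  obtain M W M' W' where q: "\<not> p dvd W" "q = of_int (p * M) / of_int W"
    and r: "\<not> p dvd W'" "r = of_int (p * M') / of_int W'"
    using assms unfolding p_divisible_def by blast
  have "W \<noteq> 0" "W' \<noteq> 0" using q(1) r(1) by auto
  hence "q + r = of_int (p * (M * W' + M' * W)) / of_int (W * W')"
    by (simp add: q(2) r(2) field_simps)
  moreover have "\<not> p dvd W * W'" using p q(1) r(1) by (simp add: prime_dvd_mult_iff)
  ultimately show ?thesis unfolding p_divisible_def by blast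
qed

lemma p_divisible_sum:
  assumes "prime p" "\<And>i. i \<in> F \<Longrightarrow> p_divisible p (f i :: 'a::field_char_0)"
  shows "p_divisible p (\<Sum>i\<in>F. f i)"
proof -
  have "p_divisible p (0 :: 'a)"
    using assms(1) unfolding p_divisible_def by (intro exI[of _ 0] exI[of _ 1]) auto
  thus ?thesis using assms(2)
    by (induction F rule: infinite_finite_induct) (auto intro: p_divisible_add[OF assms(1)])
qed

lemma not_p_divisible_frac:
  assumes p: "prime p" and "\<not> p dvd n" "\<not> p dvd w"
  shows "\<not> p_divisible p (of_int n / of_int w :: 'a::field_char_0)"
proof
  assume "p_divisible p (of_int n / of_int w :: 'a)"
  then obtain M W where W: "\<not> p dvd W" and eq: "(of_int n / of_int w :: 'a) = of_int (p * M) / of_int W"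
    unfolding p_divisible_def by blast
  have "W \<noteq> 0" "w \<noteq> 0" using W assms(3) by auto
  hence "(of_int (n * W) :: 'a) = of_int (p * (M * w))"
    using eq by (simp add: field_simps)
  hence "n * W = p * (M * w)"
    by (simp only: of_int_eq_iff)
  hence "p dvd n * W" by simp
  thus False using p assms(2) W by (simp add: prime_dvd_mult_iff)
qed

lemma interp_sum_p_divisible:
  fixes p :: int
  assumes p: "prime p" and G: "\<And>v. v \<in> V \<Longrightarrow> G v \<subseteq> {0..<p}"
    and g: "\<And>a. a \<in> PiE V G \<Longrightarrow> \<exists>F. g (\<lambda>v. of_int (a v)) = of_int F \<and> p dvd F"
  shows "p_divisible p (interp_sum V G g :: 'a::field_char_0)"
  unfolding interp_sum_def
proof (rule p_divisible_sum[OF p])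
  fix a assume a: "a \<in> PiE V G"
  obtain F where "g (\<lambda>v. of_int (a v)) = of_int F" "p dvd F"
    using g[OF a] by blast
  then obtain M where M: "g (\<lambda>v. of_int (a v)) = (of_int (p * M) :: 'a)"
    by (metis dvdE)
  have "\<not> p dvd lagrange_denom (G v) (a v)" if "v \<in> V" for v
    using a G[OF that] that by (intro prime_not_dvd_lagrange_denom[OF p]) (auto simp: PiE_iff)
  hence "\<not> p dvd (\<Prod>v\<in>V. lagrange_denom (G v) (a v))"
    using p by (cases "finite V") (auto simp: prime_dvd_prod_iff)
  thus "p_divisible p (g (\<lambda>v. of_int (a v)) / of_int (\<Prod>v\<in>V. lagrange_denom (G v) (a v)) :: 'a)"
    unfolding p_divisible_def M by blast
qed

definition block_pairs :: "'v::linorder set \<Rightarrow> ('v \<Rightarrow> 'b) \<Rightarrow> ('v \<times> 'v) set" where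
  "block_pairs V blk = {(v, w). v \<in> V \<and> w \<in> V \<and> v < w \<and> blk v = blk w}"

definition block_vandermonde :: "'v::linorder set \<Rightarrow> ('v \<Rightarrow> 'b) \<Rightarrow> ('v \<Rightarrow> 'a::comm_ring_1) \<Rightarrow> 'a"
  where "block_vandermonde V blk x = (\<Prod>(v, w)\<in>block_pairs V blk. x w - x v)"

lemma finite_block_pairs: "finite V \<Longrightarrow> finite (block_pairs V blk)"
  unfolding block_pairs_def by (rule finite_subset[of _ "V \<times> V"]) auto

lemma block_vandermonde_of_int:
  "block_vandermonde V blk (\<lambda>v. of_int (a v)) = of_int (block_vandermonde V blk a)"
  by (simp add: block_vandermonde_def of_int_prod case_prod_beta)

lemma block_vandermonde_eq_0:
  assumes "finite V" "(v, w) \<in> block_pairs V blk" "x v = x w"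
  shows "block_vandermonde V blk x = 0"
  unfolding block_vandermonde_def
  using assms by (intro prod_zero finite_block_pairs bexI[of _ "(v, w)"]) auto

lemma poly_fun_le_block_vandermonde:
  assumes fV: "finite V"
  shows "poly_fun_le V (card (block_pairs V blk)) (block_vandermonde V blk)"
proof -
  have "poly_fun_le V (\<Sum>vw\<in>block_pairs V blk. 1) (\<lambda>x. \<Prod>vw\<in>block_pairs V blk. x (snd vw) - x (fst vw))"
    using fV by (intro poly_fun_le_prod finite_block_pairs poly_fun_le_diff poly_fun_le_var)
      (auto simp: block_pairs_def)
  thus ?thesis by (simp add: block_vandermonde_def[abs_def] case_prod_beta)
qed

text \<open>Within each block, the distinct nonnegative values of \<open>a\<close> sum to at least
  \<open>0 + 1 + \<dots>\<close>, which is the number of pairs in that block.\<close>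
lemma card_block_pairs_le_sum:
  fixes a :: "'v::linorder \<Rightarrow> int"
  assumes fV: "finite V" and nonneg: "\<And>v. v \<in> V \<Longrightarrow> a v \<ge> 0"
    and dist: "\<And>v w. (v, w) \<in> block_pairs V blk \<Longrightarrow> a v \<noteq> a w"
  shows "int (card (block_pairs V blk)) \<le> (\<Sum>v\<in>V. a v)"
proof -
  define below where "below v = {w\<in>V. blk w = blk v \<and> a w < a v}" for v
  define orient where "orient = (\<lambda>(v, w). if a w < a v then (v, w) else (w, v :: 'v))"
  have "inj_on orient (block_pairs V blk)"
  proof (rule inj_onI, clarify)
    fix v w v' w'
    assume "(v, w) \<in> block_pairs V blk" "(v', w') \<in> block_pairs V blk"
      and "orient (v, w) = orient (v', w')"
    moreover from this have "a v \<noteq> a w" "a v' \<noteq> a w'" using dist by auto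
    ultimately show "v = v' \<and> w = w'"
      unfolding orient_def block_pairs_def by (auto split: if_splits)
  qed
  moreover have "orient ` block_pairs V blk \<subseteq> Sigma V below"
    using dist unfolding orient_def below_def block_pairs_def
    by (auto split: if_splits) (metis linorder_neqE_linordered_idom)+
  ultimately have "card (block_pairs V blk) \<le> card (Sigma V below)"
    using fV by (intro card_inj_on_le) (auto simp: below_def)
  also have "\<dots> = (\<Sum>v\<in>V. card (below v))"
    using fV by (subst card_SigmaI) (auto simp: below_def)
  finally have "int (card (block_pairs V blk)) \<le> (\<Sum>v\<in>V. int (card (below v)))"
    by (simp flip: of_nat_sum)
  also have "\<dots> \<le> (\<Sum>v\<in>V. a v)"
  proof (rule sum_mono)
    fix v assume v: "v \<in> V"
    have "inj_on a (below v)"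
    proof (rule inj_onI)
      fix w w' assume "w \<in> below v" "w' \<in> below v" "a w = a w'"
      thus "w = w'" using dist[of w w'] dist[of w' w]
        by (cases w w' rule: linorder_cases) (auto simp: below_def block_pairs_def)
    qed
    moreover have "a ` below v \<subseteq> {0..<a v}" using nonneg by (auto simp: below_def)
    ultimately have "card (below v) \<le> card {0..<a v}"
      by (intro card_inj_on_le) auto
    thus "int (card (below v)) \<le> a v" using nonneg[OF v] by simp
  qed
  finally show ?thesis .
qed

lemma degree_linear_factors_diff_le:
  fixes h h' :: "'b \<Rightarrow> 'a::idom"
  assumes fin: "finite E" "finite E'" and card: "card E' = card E"
  shows "degree ((\<Prod>c\<in>E. [:- h c, 1:]) - (\<Prod>c\<in>E'. [:- h' c, 1:])) \<le> card E - 1"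
proof -
  have deg: "degree (\<Prod>c\<in>F. [:- k c, 1:]) = card F" if "finite F" for F and k :: "'b \<Rightarrow> 'a"
    using that by (simp add: degree_prod_eq_sum_degree)
  have lead: "coeff (\<Prod>c\<in>F. [:- k c, 1:]) (card F) = 1" if "finite F" for F and k :: "'b \<Rightarrow> 'a"
    using lead_coeff_prod[of "\<lambda>c. [:- k c, 1:]" F] deg[OF that] by simp
  let ?d = "(\<Prod>c\<in>E. [:- h c, 1:]) - (\<Prod>c\<in>E'. [:- h' c, 1:])"
  have "degree ?d \<le> card E"
    using degree_diff_le_max[of "\<Prod>c\<in>E. [:- h c, 1:]" "\<Prod>c\<in>E'. [:- h' c, 1:]"] deg fin card
    by simp
  moreover have "coeff ?d (card E) = 0"
    using lead fin card by (metis coeff_diff diff_self)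
  ultimately have "degree ?d \<noteq> card E \<or> ?d = 0"
    by (metis leading_coeff_0_iff)
  with \<open>degree ?d \<le> card E\<close> show ?thesis by auto
qed

lemma prime_dvd_prod_other_residues:
  fixes p :: int
  assumes "p > 0" "s mod p \<noteq> r mod p"
  shows "p dvd (\<Prod>c\<in>{0..<p} - {r mod p}. s - c)"
proof -
  have "s mod p \<in> {0..<p} - {r mod p}" using assms by simp
  hence "(s - s mod p) dvd (\<Prod>c\<in>{0..<p} - {r mod p}. s - c)"
    by (intro dvd_prodI) auto
  moreover have "p dvd s - s mod p" by (simp add: minus_mod_eq_mult_div)
  ultimately show ?thesis by (rule dvd_trans[rotated])
qed

lemma interp_sum_single_point:
  assumes fin: "finite V" "\<And>v. v \<in> V \<Longrightarrow> finite (G v)" and a0: "a0 \<in> PiE V G"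
    and vanish: "\<And>a. a \<in> PiE V G \<Longrightarrow> a \<noteq> a0 \<Longrightarrow> g (\<lambda>v. of_int (a v)) = 0"
  shows "interp_sum V G g =
    g (\<lambda>v. of_int (a0 v)) / of_int (\<Prod>v\<in>V. lagrange_denom (G v) (a0 v))"
proof -
  have "interp_sum V G g =
    (\<Sum>a\<in>{a0}. g (\<lambda>v. of_int (a v)) / of_int (\<Prod>v\<in>V. lagrange_denom (G v) (a v)))"
    unfolding interp_sum_def using fin a0 vanish by (intro sum.mono_neutral_right finite_PiE) auto
  thus ?thesis by simp
qed

text \<open>Unless the block Vandermonde factor vanishes, the distinct values in each block force
  \<open>\<Sum>a\<close> into the interval \<open>[#pairs, \<Sum>e)\<close>, where the second factor vanishes.\<close>
lemma block_vandermonde_gap_vanishes: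
  fixes a :: "'v::linorder \<Rightarrow> int" and e :: "'v \<Rightarrow> nat"
  assumes fV: "finite V" and a: "a \<in> PiE V (\<lambda>v. {0..int (e v)})" "a \<noteq> restrict (\<lambda>v. int (e v)) V"
  shows "block_vandermonde V blk a *
    (\<Prod>c\<in>{int (card (block_pairs V blk))..<(\<Sum>v\<in>V. int (e v))}. (\<Sum>v\<in>V. a v) - c) = 0"
proof (cases "\<exists>(v, w)\<in>block_pairs V blk. a v = a w")
  case True
  then obtain v w where "(v, w) \<in> block_pairs V blk" "a v = a w" by blast
  thus ?thesis by (simp add: block_vandermonde_eq_0[OF fV])
next
  case False
  have range: "0 \<le> a v" "a v \<le> int (e v)" if "v \<in> V" for v
    using a(1) that by auto
  have "int (card (block_pairs V blk)) \<le> (\<Sum>v\<in>V. a v)"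
  proof (rule card_block_pairs_le_sum[OF fV])
    show "0 \<le> a v" if "v \<in> V" for v
      using range(1)[OF that] .
    show "a v \<noteq> a w" if "(v, w) \<in> block_pairs V blk" for v w
      using False that by blast
  qed
  moreover have "\<not> (\<forall>v\<in>V. a v = int (e v))"
  proof
    assume "\<forall>v\<in>V. a v = int (e v)"
    hence "a = restrict (\<lambda>v. int (e v)) V"
      using a(1) by (intro extensionalityI[where A = V]) (auto simp: PiE_iff)
    thus False using a(2) by contradiction
  qed
  then obtain v0 where "v0 \<in> V" "a v0 \<noteq> int (e v0)" by blast
  hence "(\<Sum>v\<in>V. a v) < (\<Sum>v\<in>V. int (e v))"
    using range by (intro sum_strict_mono_ex1 fV) (auto simp: order_less_le)
  ultimately have "(\<Sum>v\<in>V. a v) \<in> {int (card (block_pairs V blk))..<(\<Sum>v\<in>V. int (e v))}"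
    by simp
  hence "(\<Prod>c\<in>{int (card (block_pairs V blk))..<(\<Sum>v\<in>V. int (e v))}. (\<Sum>v\<in>V. a v) - c) = 0"
    by (intro prod_zero) auto
  thus ?thesis by simp
qed

text \<open>On the grid \<open>\<Prod>v. {0..e v}\<close> the polynomial below vanishes everywhere except at the
  corner \<open>e\<close>, so its top coefficient can be read off from that single value.\<close>
lemma interp_sum_block_gap_not_p_divisible:
  fixes V :: "'v::linorder set" and blk :: "'v \<Rightarrow> 'b" and e :: "'v \<Rightarrow> nat" and p :: int
  assumes p: "prime p" and fV: "finite V"
    and e_dist: "\<And>v w. (v, w) \<in> block_pairs V blk \<Longrightarrow> e v \<noteq> e w"
    and e_less: "\<And>v. v \<in> V \<Longrightarrow> int (e v) < p"
    and e_sum: "(\<Sum>v\<in>V. int (e v)) < int (card (block_pairs V blk)) + p"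
  defines "gap \<equiv> {int (card (block_pairs V blk))..<(\<Sum>v\<in>V. int (e v))}"
  shows "\<not> p_divisible p (interp_sum V (\<lambda>v. {0..int (e v)})
    (\<lambda>x. block_vandermonde V blk x * (\<Prod>c\<in>gap. (\<Sum>v\<in>V. x v) - of_int c)) :: 'a::field_char_0)"
proof -
  define H where "H v = {0..int (e v)}" for v
  define a0 where "a0 = restrict (\<lambda>v. int (e v)) V"
  define g :: "('v \<Rightarrow> 'a) \<Rightarrow> 'a"
    where "g x = block_vandermonde V blk x * (\<Prod>c\<in>gap. (\<Sum>v\<in>V. x v) - of_int c)" for x
  have g_val: "g (\<lambda>v. of_int (a v)) =
      of_int (block_vandermonde V blk a * (\<Prod>c\<in>gap. (\<Sum>v\<in>V. a v) - c))" for a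
    by (simp add: g_def block_vandermonde_of_int of_int_prod)
  have "interp_sum V H g = g (\<lambda>v. of_int (a0 v)) / of_int (\<Prod>v\<in>V. lagrange_denom (H v) (a0 v))"
  proof (rule interp_sum_single_point)
    show "g (\<lambda>v. of_int (a v)) = 0" if "a \<in> PiE V H" "a \<noteq> a0" for a
    proof -
      have "block_vandermonde V blk a * (\<Prod>c\<in>gap. (\<Sum>v\<in>V. a v) - c) = 0"
        unfolding gap_def using that
        by (intro block_vandermonde_gap_vanishes[OF fV]) (simp_all add: H_def[abs_def] a0_def)
      thus ?thesis unfolding g_val by (simp only: of_int_0)
    qed
  qed (simp_all add: fV H_def[abs_def] a0_def restrict_PiE_iff del: restrict_apply)
  moreover have "(\<Sum>v\<in>V. a0 v) = (\<Sum>v\<in>V. int (e v))"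
    by (simp add: a0_def)
  ultimately have top: "interp_sum V H g =
    of_int (block_vandermonde V blk a0 * (\<Prod>c\<in>gap. (\<Sum>v\<in>V. int (e v)) - c)) /
    of_int (\<Prod>v\<in>V. lagrange_denom (H v) (a0 v))"
    by (simp only: g_val)
  have "\<not> p dvd block_vandermonde V blk a0"
    unfolding block_vandermonde_def
  proof (rule prime_not_dvd_prod_small[OF p finite_block_pairs[OF fV]])
    fix vw assume "vw \<in> block_pairs V blk"
    then obtain v w where vw: "vw = (v, w)" "(v, w) \<in> block_pairs V blk" "v \<in> V" "w \<in> V"
      by (auto simp: block_pairs_def)
    thus "(case vw of (v, w) \<Rightarrow> a0 w - a0 v) \<noteq> 0 \<and> \<bar>case vw of (v, w) \<Rightarrow> a0 w - a0 v\<bar> < p"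
      using e_dist[OF vw(2)] e_less[OF vw(3)] e_less[OF vw(4)] by (auto simp: a0_def)
  qed
  moreover have "\<not> p dvd (\<Prod>c\<in>gap. (\<Sum>v\<in>V. int (e v)) - c)"
    using e_sum by (intro prime_not_dvd_prod_small[OF p]) (auto simp: gap_def)
  moreover have "\<not> p dvd lagrange_denom (H v) (a0 v)" if "v \<in> V" for v
    using e_less[OF that] that by (intro prime_not_dvd_lagrange_denom[OF p]) (auto simp: H_def a0_def)
  hence "\<not> p dvd (\<Prod>v\<in>V. lagrange_denom (H v) (a0 v))"
    using p fV by (simp add: prime_dvd_prod_iff)
  ultimately show ?thesis
    unfolding top H_def[symmetric] g_def[symmetric] using p
    by (intro not_p_divisible_frac) (simp_all add: prime_dvd_mult_iff)
qed

lemma interp_sum_no_choice_p_divisible: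
  fixes V :: "'v::linorder set" and blk :: "'v \<Rightarrow> 'b" and G :: "'v \<Rightarrow> int set" and p z :: int
  assumes p: "prime p" and fV: "finite V" and G: "\<And>v. v \<in> V \<Longrightarrow> G v \<subseteq> {0..<p}"
    and no_choice: "\<not> (\<exists>a\<in>PiE V G. (\<forall>(v, w)\<in>block_pairs V blk. a v \<noteq> a w) \<and>
      (\<Sum>v\<in>V. a v) mod p = z mod p)"
  shows "p_divisible p (interp_sum V G (\<lambda>x. block_vandermonde V blk x *
    (\<Prod>c\<in>{0..<p} - {z mod p}. (\<Sum>v\<in>V. x v) - of_int c)) :: 'a::field_char_0)"
proof (rule interp_sum_p_divisible[OF p G])
  fix a assume a: "a \<in> PiE V G"
  have "p dvd block_vandermonde V blk a * (\<Prod>c\<in>{0..<p} - {z mod p}. (\<Sum>v\<in>V. a v) - c)"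
  proof (cases "\<exists>(v, w)\<in>block_pairs V blk. a v = a w")
    case True
    then obtain v w where "(v, w) \<in> block_pairs V blk" "a v = a w" by blast
    thus ?thesis by (simp add: block_vandermonde_eq_0[OF fV])
  next
    case False
    hence "(\<Sum>v\<in>V. a v) mod p \<noteq> z mod p" using no_choice a by blast
    thus ?thesis using prime_gt_0_int[OF p] by (intro dvd_mult prime_dvd_prod_other_residues)
  qed
  moreover have "block_vandermonde V blk (\<lambda>v. of_int (a v)) *
      (\<Prod>c\<in>{0..<p} - {z mod p}. (\<Sum>v\<in>V. of_int (a v)) - of_int c) =
      (of_int (block_vandermonde V blk a * (\<Prod>c\<in>{0..<p} - {z mod p}. (\<Sum>v\<in>V. a v) - c)) :: 'a)"
    by (simp add: block_vandermonde_of_int of_int_prod)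
  ultimately show "\<exists>F. block_vandermonde V blk (\<lambda>v. of_int (a v)) *
      (\<Prod>c\<in>{0..<p} - {z mod p}. (\<Sum>v\<in>V. of_int (a v)) - of_int c) = (of_int F :: 'a) \<and> p dvd F"
    by blast
qed

text \<open>If no choice existed, \<open>f x = \<Delta>(x) \<Prod>\<^bsub>c \<noteq> z\<^esub> (\<Sum>x - c)\<close>, with \<open>\<Delta>\<close> the block
  Vandermonde product, would vanish mod \<open>p\<close> on \<open>\<Prod>v. G v\<close>, making its top coefficient
  \<open>p\<close>-divisible. Replacing the second factor by the product over the gap interval keeps the top
  coefficient, which \<open>interp_sum_block_gap_not_p_divisible\<close> shows is not \<open>p\<close>-divisible.\<close>
theorem blockwise_distinct_choice_with_sum:
  fixes V :: "'v::linorder set" and blk :: "'v \<Rightarrow> 'b" and G :: "'v \<Rightarrow> int set"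
    and e :: "'v \<Rightarrow> nat" and p z :: int
  assumes p: "prime p" and fV: "finite V"
    and G: "\<And>v. v \<in> V \<Longrightarrow> G v \<subseteq> {0..<p} \<and> card (G v) = Suc (e v)"
    and e_dist: "\<And>v w. (v, w) \<in> block_pairs V blk \<Longrightarrow> e v \<noteq> e w"
    and e_sum: "(\<Sum>v\<in>V. e v) = card (block_pairs V blk) + nat (p - 1)"
  shows "\<exists>a\<in>PiE V G. (\<forall>(v, w)\<in>block_pairs V blk. a v \<noteq> a w) \<and> (\<Sum>v\<in>V. a v) mod p = z mod p"
proof (rule ccontr)
  assume no_choice: "\<not> ?thesis"
  have p2: "p \<ge> 2" using p by (simp add: prime_ge_2_int)
  have G_card: "finite (G v) \<and> card (G v) = Suc (e v)" if "v \<in> V" for v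
    using G[OF that] finite_subset[of "G v" "{0..<p}"] by auto
  have e_less: "int (e v) < p" if "v \<in> V" for v
  proof -
    have "card (G v) \<le> card {0..<p}" using G[OF that] by (intro card_mono) auto
    thus ?thesis using G[OF that] by simp
  qed
  define P where "P = card (block_pairs V blk)"
  define m where "m = nat (p - 1)"
  define E where "E = {0..<p} - {z mod p}"
  define gap where "gap = {int P..<(\<Sum>v\<in>V. int (e v))}"
  have m: "(\<Sum>v\<in>V. e v) = P + m" "m \<ge> 1"
    using e_sum p2 by (simp_all add: P_def m_def)
  have card_E: "finite E" "card E = m" "finite gap" "card gap = m"
    using p2 m by (simp_all add: E_def gap_def m_def card_Diff_singleton flip: of_nat_sum)
  define s :: "('v \<Rightarrow> rat) \<Rightarrow> rat" where "s x = (\<Sum>v\<in>V. x v)" for x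
  define Q where "Q F = (\<Prod>c\<in>F. [:- of_int c, 1:] :: rat poly)" for F
  define f where "f F x = block_vandermonde V blk x * (\<Prod>c\<in>F. s x - of_int c)" for F x
  have f_Q: "f F x = block_vandermonde V blk x * poly (Q F) (s x)" for F x
    by (simp add: f_def Q_def poly_prod)
  have s: "poly_fun_le V 1 s"
    unfolding s_def[abs_def] by (intro poly_fun_le_sum fV poly_fun_le_var)
  have deg_Q: "degree (Q gap) \<le> m" "degree (Q E - Q gap) \<le> m - 1"
    using card_E degree_linear_factors_diff_le[of E gap "of_int" "of_int"]
    by (simp_all add: Q_def degree_prod_eq_sum_degree)
  have deg_gap: "poly_fun_le V (monom_degree V e) (f gap)"
    unfolding f_Q[abs_def] monom_degree_def m(1) P_def
    by (intro poly_fun_le_mult poly_fun_le_block_vandermonde fV poly_fun_le_poly_comp[OF s deg_Q(1)])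
  have deg_diff: "poly_fun_le V (P + (m - 1)) (\<lambda>x. f E x - f gap x)"
    unfolding f_Q P_def right_diff_distrib[symmetric] poly_diff[symmetric]
    by (intro poly_fun_le_mult poly_fun_le_block_vandermonde fV poly_fun_le_poly_comp[OF s deg_Q(2)])
  have "interp_sum V G (f E) = interp_sum V G (f gap)"
    using interp_sum_low_degree[OF fV G_card deg_diff] m by (simp add: interp_sum_diff monom_degree_def)
  also have "\<dots> = interp_sum V (\<lambda>v. {0..int (e v)}) (f gap)"
    using deg_gap by (intro interp_sum_indep_nodes[OF fV G_card]) simp_all
  finally have "interp_sum V G (f E) = interp_sum V (\<lambda>v. {0..int (e v)}) (f gap)" .
  moreover have "(\<Sum>v\<in>V. int (e v)) < int (card (block_pairs V blk)) + p"
    using m(1) p2 by (simp add: P_def m_def flip: of_nat_sum)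
  note interp_sum_block_gap_not_p_divisible[where 'a = rat, OF p fV e_dist e_less this]
  moreover note interp_sum_no_choice_p_divisible[where 'a = rat, OF p fV _ no_choice]
  ultimately show False using G by (simp add: f_def[abs_def] s_def gap_def P_def E_def)
qed

section \<open>Sums of subsets of prescribed sizes\<close>

lemma exists_bounded_parts:
  fixes R :: "'i \<Rightarrow> nat"
  assumes "finite I" "t \<le> (\<Sum>i\<in>I. R i)"
  shows "\<exists>r. (\<forall>i\<in>I. r i \<le> R i) \<and> (\<Sum>i\<in>I. r i) = t"
  using assms
proof (induction I arbitrary: t rule: finite_induct)
  case empty thus ?case by auto
next
  case (insert i I)
  define t1 where "t1 = min (R i) t"
  have "t - t1 \<le> (\<Sum>i\<in>I. R i)" using insert by (auto simp: t1_def)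
  then obtain r where r: "\<forall>i\<in>I. r i \<le> R i" "(\<Sum>i\<in>I. r i) = t - t1" using insert by blast
  have "(\<Sum>j\<in>I. (r(i := t1)) j) = (\<Sum>j\<in>I. r j)"
    using insert by (intro sum.cong) auto
  hence "(\<Sum>j\<in>insert i I. (r(i := t1)) j) = t" using insert r by (simp add: t1_def)
  moreover have "\<forall>j\<in>insert i I. (r(i := t1)) j \<le> R j" using r by (auto simp: t1_def)
  ultimately show ?case by blast
qed

lemma exists_sorted_bounded_parts:
  fixes M :: nat
  shows "r \<le> k * M \<Longrightarrow> \<exists>q. (\<forall>j<k. q j \<le> M) \<and> (\<forall>j j'. j \<le> j' \<longrightarrow> j' < k \<longrightarrow> q j \<le> q j')
    \<and> (\<Sum>j<k. q j) = r"
proof (induction k arbitrary: r)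
  case 0 thus ?case by auto
next
  case (Suc k)
  show ?case
  proof (cases "r \<ge> M")
    case True
    hence "r - M \<le> k * M" using Suc.prems by (simp add: algebra_simps)
    then obtain q where q: "\<forall>j<k. q j \<le> M" "\<forall>j j'. j \<le> j' \<longrightarrow> j' < k \<longrightarrow> q j \<le> q j'"
      "(\<Sum>j<k. q j) = r - M"
      using Suc.IH by blast
    have "(\<Sum>j<k. (q(k := M)) j) = (\<Sum>j<k. q j)" by (intro sum.cong) auto
    hence "(\<Sum>j<Suc k. (q(k := M)) j) = r" using q True by simp
    moreover have "\<forall>j<Suc k. (q(k := M)) j \<le> M" using q by (auto simp: less_Suc_eq)
    moreover have "\<forall>j j'. j \<le> j' \<longrightarrow> j' < Suc k \<longrightarrow> (q(k := M)) j \<le> (q(k := M)) j'"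
      using q by (auto simp: less_Suc_eq)
    ultimately show ?thesis by blast
  next
    case False
    define q where "q = (\<lambda>j. if j = k then r else (0::nat))"
    have "(\<Sum>j<Suc k. q j) = r" by (simp add: q_def)
    moreover have "\<forall>j<Suc k. q j \<le> M" using False by (auto simp: q_def)
    moreover have "\<forall>j j'. j \<le> j' \<longrightarrow> j' < Suc k \<longrightarrow> q j \<le> q j'"
      by (auto simp: q_def)
    ultimately show ?thesis by blast
  qed
qed

lemma card_block_pairs_Sigma_fst:
  fixes I :: "'i::linorder set"
  assumes "finite I"
  shows "card (block_pairs (Sigma I (\<lambda>i. {..<k i})) fst) = (\<Sum>v\<in>Sigma I (\<lambda>i. {..<k i}). snd v)"
proof -
  let ?V = "Sigma I (\<lambda>i. {..<k i})"
  have "bij_betw (\<lambda>(v, w). (w, snd v)) (block_pairs ?V fst) (Sigma ?V (\<lambda>w. {..<snd w}))"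
    by (rule bij_betw_byWitness[where f' = "\<lambda>(w, j). ((fst w, j), w)"])
      (auto simp: block_pairs_def)
  hence "card (block_pairs ?V fst) = card (Sigma ?V (\<lambda>w. {..<snd w}))"
    by (rule bij_betw_same_card)
  also have "\<dots> = (\<Sum>v\<in>?V. snd v)"
    using assms by (subst card_SigmaI) auto
  finally show ?thesis .
qed

text \<open>In block \<open>i\<close> take the exponents \<open>j + q j\<close> (\<open>j < k i\<close>) with \<open>q\<close> nondecreasing: they are
  distinct, below \<open>N i\<close>, and exceed the pair count \<open>0 + 1 + \<dots> + (k i - 1)\<close> by \<open>\<Sum>j. q j\<close>.\<close>
lemma exists_block_exponents:
  fixes I :: "'i::linorder set" and k N :: "'i \<Rightarrow> nat"
  assumes fI: "finite I" and k: "\<And>i. i \<in> I \<Longrightarrow> k i \<le> N i"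
    and big: "n \<le> (\<Sum>i\<in>I. k i * (N i - k i))"
  defines "V \<equiv> Sigma I (\<lambda>i. {..<k i})"
  obtains e where "\<And>v. v \<in> V \<Longrightarrow> e v < N (fst v)"
    and "\<And>v w. (v, w) \<in> block_pairs V fst \<Longrightarrow> e v \<noteq> e w"
    and "(\<Sum>v\<in>V. e v) = card (block_pairs V fst) + n"
proof -
  obtain r where r: "\<forall>i\<in>I. r i \<le> k i * (N i - k i)" "(\<Sum>i\<in>I. r i) = n"
    using exists_bounded_parts[OF fI big] by blast
  have "\<forall>i\<in>I. \<exists>q. (\<forall>j<k i. q j \<le> N i - k i) \<and>
      (\<forall>j j'. j \<le> j' \<longrightarrow> j' < k i \<longrightarrow> q j \<le> q j') \<and> (\<Sum>j<k i. q j) = r i"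
    using exists_sorted_bounded_parts r(1) by blast
  then obtain q where q: "\<And>i. i \<in> I \<Longrightarrow> (\<forall>j<k i. q i j \<le> N i - k i) \<and>
      (\<forall>j j'. j \<le> j' \<longrightarrow> j' < k i \<longrightarrow> q i j \<le> q i j') \<and> (\<Sum>j<k i. q i j) = r i"
    by metis
  define e where "e = (\<lambda>(i, j). j + q i j)"
  show thesis
  proof
    show "e v < N (fst v)" if "v \<in> V" for v
      using that q k by (force simp: V_def e_def)
    show "e v \<noteq> e w" if vw: "(v, w) \<in> block_pairs V fst" for v w
    proof -
      obtain i j j' where "v = (i, j)" "w = (i, j')" "j < j'" "j' < k i" "i \<in> I"
        using vw by (cases v, cases w) (auto simp: block_pairs_def V_def less_prod_def)
      thus ?thesis
        using q[of i] add_less_le_mono[of j j' "q i j" "q i j'"] by (auto simp: e_def)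
    qed
    have "(\<Sum>v\<in>V. e v) = (\<Sum>v\<in>V. snd v) + (\<Sum>(i, j)\<in>V. q i j)"
      by (simp add: e_def case_prod_beta sum.distrib)
    also have "(\<Sum>(i, j)\<in>V. q i j) = (\<Sum>i\<in>I. \<Sum>j<k i. q i j)"
      unfolding V_def using fI by (simp add: sum.Sigma)
    also have "\<dots> = n" using q r(2) by (simp cong: sum.cong)
    finally show "(\<Sum>v\<in>V. e v) = card (block_pairs V fst) + n"
      unfolding V_def by (simp add: card_block_pairs_Sigma_fst[OF fI])
  qed
qed

lemma block_injective_choice_subsets:
  fixes I :: "'i::linorder set" and k :: "'i \<Rightarrow> nat" and a :: "'i \<times> nat \<Rightarrow> int"
    and Y :: "'i \<Rightarrow> int set"
  defines "V \<equiv> Sigma I (\<lambda>i. {..<k i})" and "T \<equiv> \<lambda>i. (\<lambda>j. a (i, j)) ` {..<k i}"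
  assumes fI: "finite I" and a_Y: "\<forall>i\<in>I. \<forall>j<k i. a (i, j) \<in> Y i"
    and a_dist: "\<forall>(v, w)\<in>block_pairs V fst. a v \<noteq> a w"
  shows "\<forall>i\<in>I. T i \<subseteq> Y i \<and> card (T i) = k i" and "(\<Sum>i\<in>I. \<Sum>t\<in>T i. t) = (\<Sum>v\<in>V. a v)"
proof -
  have inj: "inj_on (\<lambda>j. a (i, j)) {..<k i}" if "i \<in> I" for i
  proof (rule inj_onI, rule ccontr)
    fix j j' assume "j \<in> {..<k i}" "j' \<in> {..<k i}" "a (i, j) = a (i, j')" "j \<noteq> j'"
    moreover from this have "((i, min j j'), (i, max j j')) \<in> block_pairs V fst"
      using that by (auto simp: block_pairs_def V_def min_def max_def)
    ultimately show False using a_dist by (auto simp: min_def max_def split: if_splits)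
  qed
  show "\<forall>i\<in>I. T i \<subseteq> Y i \<and> card (T i) = k i"
  proof
    fix i assume i: "i \<in> I"
    show "T i \<subseteq> Y i \<and> card (T i) = k i"
      using a_Y i card_image[OF inj[OF i]] by (auto simp: T_def)
  qed
  have "(\<Sum>i\<in>I. \<Sum>t\<in>T i. t) = (\<Sum>i\<in>I. \<Sum>j<k i. a (i, j))"
    by (intro sum.cong refl) (simp add: T_def sum.reindex[OF inj])
  also have "\<dots> = (\<Sum>v\<in>V. a v)"
    unfolding V_def using fI by (simp add: sum.Sigma case_prod_beta)
  finally show "(\<Sum>i\<in>I. \<Sum>t\<in>T i. t) = (\<Sum>v\<in>V. a v)" .
qed

text \<open>Realise each block \<open>i\<close> by \<open>k i\<close> variables with node sets \<open>G (i, j) \<subseteq> Y i\<close>;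
  distinct values within a block form a \<open>k i\<close>-subset of \<open>Y i\<close>.\<close>
theorem exists_subsets_sum_mod_prime:
  fixes I :: "'i::linorder set" and Y :: "'i \<Rightarrow> int set" and k :: "'i \<Rightarrow> nat" and p z :: int
  assumes p: "prime p" and fI: "finite I"
    and Y: "\<And>i. i \<in> I \<Longrightarrow> Y i \<subseteq> {0..<p}"
    and k: "\<And>i. i \<in> I \<Longrightarrow> k i \<le> card (Y i)"
    and big: "nat (p - 1) \<le> (\<Sum>i\<in>I. k i * (card (Y i) - k i))"
  shows "\<exists>T. (\<forall>i\<in>I. T i \<subseteq> Y i \<and> card (T i) = k i) \<and> (\<Sum>i\<in>I. \<Sum>t\<in>T i. t) mod p = z mod p"
proof -
  define V where "V = Sigma I (\<lambda>i. {..<k i})"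
  have fV: "finite V" unfolding V_def using fI by auto
  obtain e where e_less: "\<And>v. v \<in> V \<Longrightarrow> e v < card (Y (fst v))"
    and e_dist: "\<And>v w. (v, w) \<in> block_pairs V fst \<Longrightarrow> e v \<noteq> e w"
    and e_sum: "(\<Sum>v\<in>V. e v) = card (block_pairs V fst) + nat (p - 1)"
    using exists_block_exponents[OF fI k big] unfolding V_def by blast
  have "\<forall>v\<in>V. \<exists>S. S \<subseteq> Y (fst v) \<and> card S = Suc (e v)"
  proof
    fix v assume "v \<in> V"
    hence "Suc (e v) \<le> card (Y (fst v))" using e_less by (simp add: Suc_le_eq)
    then obtain S where "S \<subseteq> Y (fst v)" "card S = Suc (e v)"
      by (rule obtain_subset_with_card_n)
    thus "\<exists>S. S \<subseteq> Y (fst v) \<and> card S = Suc (e v)" by blast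
  qed
  then obtain G where G: "\<forall>v\<in>V. G v \<subseteq> Y (fst v) \<and> card (G v) = Suc (e v)"
    by (rule bchoice[THEN exE])
  have G': "G v \<subseteq> {0..<p} \<and> card (G v) = Suc (e v)" if "v \<in> V" for v
  proof -
    have "G v \<subseteq> Y (fst v)" "card (G v) = Suc (e v)" using G that by auto
    moreover have "Y (fst v) \<subseteq> {0..<p}" using that by (intro Y) (auto simp: V_def)
    ultimately show ?thesis by blast
  qed
  obtain a where a: "a \<in> PiE V G" "\<forall>(v, w)\<in>block_pairs V fst. a v \<noteq> a w"
    and a_sum: "(\<Sum>v\<in>V. a v) mod p = z mod p"
    using blockwise_distinct_choice_with_sum[OF p fV G' e_dist e_sum, of z] by blast
  have "\<forall>i\<in>I. \<forall>j<k i. a (i, j) \<in> Y i"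
  proof (intro ballI allI impI)
    fix i j assume "i \<in> I" "j < k i"
    hence ij: "(i, j) \<in> V" by (simp add: V_def)
    hence "a (i, j) \<in> G (i, j)" by (rule PiE_mem[OF a(1)])
    thus "a (i, j) \<in> Y i" using bspec[OF G ij] by auto
  qed
  note T = block_injective_choice_subsets[where k = k and a = a and Y = Y, OF fI this,
      folded V_def, OF a(2)]
  show ?thesis
    using T a_sum by (intro exI[of _ "\<lambda>i. (\<lambda>j. a (i, j)) ` {..<k i}"]) simp
qed

section \<open>Arithmetic in \<open>\<int>\<^sub>p\<^sup>2\<close>\<close>

definition scale2 :: "int \<Rightarrow> int \<times> int \<Rightarrow> int \<Rightarrow> int \<times> int" where
  "scale2 p g t = ((t * fst g) mod p, (t * snd g) mod p)"

lemma add2_assoc: "add2 p (add2 p a b) c = add2 p a (add2 p b c)"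
  by (simp add: add2_def mod_add_left_eq mod_add_right_eq add.assoc)

lemma add2_neg2_right: "add2 p w (neg2 p w) = (0, 0)"
  by (simp add: add2_def neg2_def mod_add_right_eq)

lemma add2_Zp2: "p > 0 \<Longrightarrow> add2 p a b \<in> Zp2 p"
  by (simp add: add2_def Zp2_def Zp_def)

lemma sum2_Zp2: "p > 0 \<Longrightarrow> sum2 p S \<in> Zp2 p"
  by (simp add: sum2_def Zp2_def Zp_def)

lemma add2_left_cancel:
  assumes "b \<in> Zp2 p" "b' \<in> Zp2 p" "add2 p a b = add2 p a b'"
  shows "b = b'"
proof -
  have "y = y'" if "y \<in> Zp p" "y' \<in> Zp p" "(c + y) mod p = (c + y') mod p" for c y y'
    using that cong_add_lcancel[of c y y' p] by (simp add: cong_def Zp_def)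
  thus ?thesis using assms by (cases b, cases b') (auto simp: add2_def Zp2_def)
qed

lemma sum2_union_disjoint:
  "finite S \<Longrightarrow> finite W \<Longrightarrow> S \<inter> W = {} \<Longrightarrow> sum2 p (S \<union> W) = add2 p (sum2 p S) (sum2 p W)"
  by (simp add: sum2_def add2_def sum.union_disjoint mod_add_eq)

lemma Zp_double_eq_self_imp_0:
  assumes "a \<in> Zp p" "(a + a) mod p = a"
  shows "a = 0"
proof -
  have "p dvd a"
    using assms mod_eq_dvd_iff[of "a + a" p a] by (simp add: Zp_def)
  thus ?thesis using assms zdvd_not_zless[of a p] by (force simp: Zp_def)
qed

lemma hom_Zp2_zero:
  assumes "(0, 0) \<in> Zp2 p" "\<pi> (0, 0) \<in> Zp p"
    and "\<pi> (add2 p (0, 0) (0, 0)) = addp p (\<pi> (0, 0)) (\<pi> (0, 0))"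
  shows "\<pi> (0, 0) = 0"
proof (rule Zp_double_eq_self_imp_0[OF assms(2)])
  show "(\<pi> (0, 0) + \<pi> (0, 0)) mod p = \<pi> (0, 0)"
    using assms(3) by (simp add: add2_def addp_def)
qed

lemma hom_sum2:
  assumes p: "p > 0"
    and \<pi>: "\<forall>y\<in>Zp2 p. \<pi> y \<in> Zp p" "\<forall>y\<in>Zp2 p. \<forall>z\<in>Zp2 p. \<pi> (add2 p y z) = addp p (\<pi> y) (\<pi> z)"
  shows "finite S \<Longrightarrow> S \<subseteq> Zp2 p \<Longrightarrow> \<pi> (sum2 p S) = (\<Sum>b\<in>S. \<pi> b) mod p"
proof (induction S rule: finite_induct)
  case empty
  have "(0, 0) \<in> Zp2 p" using p by (simp add: Zp2_def Zp_def)
  thus ?case using \<pi> hom_Zp2_zero[of p \<pi>] by (simp add: sum2_def)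
next
  case (insert b S)
  have "sum2 p (insert b S) = add2 p b (sum2 p S)"
    using insert by (simp add: sum2_def add2_def mod_add_right_eq)
  hence "\<pi> (sum2 p (insert b S)) = (\<pi> b + \<pi> (sum2 p S)) mod p"
    using \<pi>(2) insert.prems sum2_Zp2[OF p] by (simp add: addp_def)
  thus ?case using insert by (simp add: mod_add_right_eq)
qed

lemma Zp_hom_eq_scale2:
  fixes \<phi> :: "int \<Rightarrow> int \<times> int"
  assumes p: "p \<ge> 2" and \<phi>: "\<phi> ` Zp p \<subseteq> Zp2 p"
    and hom: "\<forall>a\<in>Zp p. \<forall>b\<in>Zp p. \<phi> (addp p a b) = add2 p (\<phi> a) (\<phi> b)"
    and t: "t \<in> Zp p"
  shows "\<phi> t = scale2 p (\<phi> 1) t"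
proof -
  have Zp01: "0 \<in> Zp p" "1 \<in> Zp p" using p by (auto simp: Zp_def)
  have "\<phi> 0 = add2 p (\<phi> 0) (\<phi> 0)"
    using hom Zp01 by (metis addp_def add_0 mod_0)
  moreover have "\<phi> 0 \<in> Zp2 p" using \<phi> Zp01 by auto
  ultimately have \<phi>0: "\<phi> 0 = (0, 0)"
    using Zp_double_eq_self_imp_0[of "fst (\<phi> 0)" p] Zp_double_eq_self_imp_0[of "snd (\<phi> 0)" p]
    by (cases "\<phi> 0") (auto simp: add2_def Zp2_def)
  have "int n < p \<longrightarrow> \<phi> (int n) = scale2 p (\<phi> 1) (int n)" for n
  proof (induction n)
    case 0 thus ?case using \<phi>0 by (simp add: scale2_def)
  next
    case (Suc n)
    show ?case
    proof
      assume n: "int (Suc n) < p"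
      have "int (Suc n) = addp p (int n) 1" using n by (simp add: addp_def)
      hence "\<phi> (int (Suc n)) = add2 p (\<phi> (int n)) (\<phi> 1)"
        using hom n Zp01 by (auto simp: Zp_def)
      also have "\<dots> = scale2 p (\<phi> 1) (int (Suc n))"
        using Suc n by (simp add: add2_def scale2_def algebra_simps mod_add_right_eq)
      finally show "\<phi> (int (Suc n)) = scale2 p (\<phi> 1) (int (Suc n))" .
    qed
  qed
  moreover have "t = int (nat t)" "int (nat t) < p" using t by (auto simp: Zp_def)
  ultimately show ?thesis by metis
qed

lemma iso_to_Zp_imp_scale2:
  assumes p: "p \<ge> 2" and U: "U \<subseteq> Zp2 p" and iso: "iso_to_Zp p U"
  obtains g where "inj_on (scale2 p g) (Zp p)" "scale2 p g ` Zp p = U"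
proof -
  obtain \<phi> where \<phi>: "bij_betw \<phi> (Zp p) U"
    and hom: "\<forall>a\<in>Zp p. \<forall>b\<in>Zp p. \<phi> (addp p a b) = add2 p (\<phi> a) (\<phi> b)"
    using iso unfolding iso_to_Zp_def by blast
  have "\<phi> t = scale2 p (\<phi> 1) t" if "t \<in> Zp p" for t
    using \<phi> U by (intro Zp_hom_eq_scale2[OF p _ hom that]) (auto simp: bij_betw_def)
  hence "bij_betw (scale2 p (\<phi> 1)) (Zp p) U"
    using \<phi> by (simp cong: bij_betw_cong)
  hence "inj_on (scale2 p (\<phi> 1)) (Zp p)" "scale2 p (\<phi> 1) ` Zp p = U"
    by (simp_all add: bij_betw_def)
  thus thesis by (rule that)
qed

lemma inj_on_coset_map:
  assumes p: "p > 0" and inj: "inj_on (scale2 p g) (Zp p)"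
  shows "inj_on (\<lambda>t. add2 p x (scale2 p g t)) (Zp p)"
proof (rule inj_onI)
  fix t t' assume "t \<in> Zp p" "t' \<in> Zp p" "add2 p x (scale2 p g t) = add2 p x (scale2 p g t')"
  moreover from this have "scale2 p g t = scale2 p g t'"
    using p add2_left_cancel[of "scale2 p g t" p "scale2 p g t'" x]
    by (simp add: scale2_def Zp2_def Zp_def)
  ultimately show "t = t'" using inj by (auto dest: inj_onD)
qed

lemma card_coset_preimage:
  assumes p: "p > 0" and inj: "inj_on (scale2 p g) (Zp p)" and U: "scale2 p g ` Zp p = U"
  shows "card {t\<in>Zp p. add2 p x (scale2 p g t) \<in> X} = N p x U X"
proof -
  let ?h = "\<lambda>t. add2 p x (scale2 p g t)"
  have "inj_on ?h {t\<in>Zp p. ?h t \<in> X}"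
    using inj_on_coset_map[OF p inj] by (rule inj_on_subset) auto
  hence "card {t\<in>Zp p. ?h t \<in> X} = card (?h ` {t\<in>Zp p. ?h t \<in> X})"
    by (simp add: card_image)
  also have "?h ` {t\<in>Zp p. ?h t \<in> X} = X \<inter> coset2 p x U"
    unfolding coset2_def U[symmetric] by auto
  finally show ?thesis by (simp add: N_def)
qed

lemma sum_mod_coset_pieces:
  fixes x :: "'i \<Rightarrow> int" and g p :: int
  shows "(\<Sum>i\<in>I. \<Sum>t\<in>T i. (x i + (t * g) mod p) mod p) mod p =
    (\<Sum>i\<in>I. int (card (T i)) * x i + g * (\<Sum>t\<in>T i. t)) mod p"
proof -
  have "[(\<Sum>i\<in>I. \<Sum>t\<in>T i. (x i + (t * g) mod p) mod p) = (\<Sum>i\<in>I. \<Sum>t\<in>T i. x i + g * t)] (mod p)"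
    by (intro cong_sum) (simp add: cong_def mod_add_right_eq mult.commute)
  moreover have "(\<Sum>t\<in>T i. x i + g * t) = int (card (T i)) * x i + g * (\<Sum>t\<in>T i. t)" for i
    by (simp add: sum.distrib sum_distrib_left)
  ultimately show ?thesis by (simp add: cong_def)
qed

lemma mod_add_scaled_eq:
  fixes p :: int
  assumes "S mod p = \<tau> mod p"
  shows "(A + g * S) mod p = (A mod p + (\<tau> * g) mod p) mod p"
proof -
  have "[g * S = g * \<tau>] (mod p)" using assms by (intro cong_scalar_left) (simp add: cong_def)
  hence "[A + g * S = A + \<tau> * g] (mod p)" by (simp add: cong_add_lcancel mult.commute)
  thus ?thesis by (simp add: cong_def mod_add_eq)
qed

lemma sum2_coset_pieces:
  fixes x :: "'i \<Rightarrow> int \<times> int" and p :: int and g :: "int \<times> int"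
  defines "h i t \<equiv> add2 p (x i) (scale2 p g t)"
  assumes fI: "finite I" and fT: "\<And>i. i \<in> I \<Longrightarrow> finite (T i)"
    and inj: "\<And>i. i \<in> I \<Longrightarrow> inj_on (h i) (T i)"
    and disj: "\<And>i j. i \<in> I \<Longrightarrow> j \<in> I \<Longrightarrow> i \<noteq> j \<Longrightarrow> h i ` T i \<inter> h j ` T j = {}"
    and T_sum: "(\<Sum>i\<in>I. \<Sum>t\<in>T i. t) mod p = \<tau> mod p"
  shows "sum2 p (\<Union>i\<in>I. h i ` T i) = add2 p
    ((\<Sum>i\<in>I. int (card (T i)) * fst (x i)) mod p, (\<Sum>i\<in>I. int (card (T i)) * snd (x i)) mod p)
    (scale2 p g \<tau>)"
proof -
  have sum_pieces: "(\<Sum>r\<in>(\<Union>i\<in>I. h i ` T i). f r) = (\<Sum>i\<in>I. \<Sum>t\<in>T i. f (h i t))"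
    for f :: "int \<times> int \<Rightarrow> int"
  proof -
    have "(\<Sum>r\<in>(\<Union>i\<in>I. h i ` T i). f r) = (\<Sum>i\<in>I. \<Sum>r\<in>h i ` T i. f r)"
      using fI fT disj by (intro sum.UNION_disjoint) auto
    also have "\<dots> = (\<Sum>i\<in>I. \<Sum>t\<in>T i. f (h i t))"
      using inj by (intro sum.cong refl) (simp add: sum.reindex)
    finally show ?thesis .
  qed
  have "(\<Sum>i\<in>I. int (card (T i)) * a i + b * (\<Sum>t\<in>T i. t)) mod p =
      ((\<Sum>i\<in>I. int (card (T i)) * a i) mod p + (\<tau> * b) mod p) mod p" for a :: "'i \<Rightarrow> int" and b
    using T_sum by (simp add: sum.distrib sum_distrib_left[symmetric] mod_add_scaled_eq)
  thus ?thesis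
    unfolding sum2_def sum_pieces
    by (simp add: h_def add2_def scale2_def sum_mod_coset_pieces)
qed

lemma sum2_transversal_pieces:
  fixes x :: "'i \<Rightarrow> int \<times> int" and p :: int and g :: "int \<times> int"
  defines "h i t \<equiv> add2 p (x i) (scale2 p g t)"
  assumes p: "p > 0" and fI: "finite I"
    and inj: "inj_on (scale2 p g) (Zp p)" and U: "scale2 p g ` Zp p = U"
    and cosets: "\<forall>y\<in>Zp2 p. \<exists>!i. i \<in> I \<and> y \<in> coset2 p (x i) U"
    and T_Zp: "\<forall>i\<in>I. T i \<subseteq> Zp p"
    and T_sum: "(\<Sum>i\<in>I. \<Sum>t\<in>T i. t) mod p = \<tau> mod p"
  shows "sum2 p (\<Union>i\<in>I. h i ` T i) = add2 p
    ((\<Sum>i\<in>I. int (card (T i)) * fst (x i)) mod p, (\<Sum>i\<in>I. int (card (T i)) * snd (x i)) mod p)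
    (scale2 p g \<tau>)"
  unfolding h_def
proof (rule sum2_coset_pieces[OF fI _ _ _ T_sum])
  show "finite (T i)" if "i \<in> I" for i
    using T_Zp that finite_subset[of "T i" "Zp p"] by (auto simp: Zp_def)
  show "inj_on (\<lambda>t. add2 p (x i) (scale2 p g t)) (T i)" if "i \<in> I" for i
    using inj_on_coset_map[OF p inj, of "x i"] T_Zp that by (blast intro: inj_on_subset)
  have coset: "add2 p (x i) (scale2 p g t) \<in> coset2 p (x i) U" if "i \<in> I" "t \<in> T i" for i t
    unfolding coset2_def U[symmetric] using T_Zp that by (intro imageI) auto
  fix i j assume ij: "i \<in> I" "j \<in> I" "i \<noteq> j"
  have False if "r \<in> (\<lambda>t. add2 p (x i) (scale2 p g t)) ` T i"
    "r \<in> (\<lambda>t. add2 p (x j) (scale2 p g t)) ` T j" for r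
  proof -
    have r: "r \<in> coset2 p (x i) U" "r \<in> coset2 p (x j) U"
      using that coset ij by auto
    hence "r \<in> Zp2 p" using add2_Zp2[OF p] unfolding coset2_def by blast
    hence E: "\<exists>!i. i \<in> I \<and> r \<in> coset2 p (x i) U" using cosets by blast
    show False
      using the1_equality[OF E, of i] the1_equality[OF E, of j] r ij by simp
  qed
  thus "(\<lambda>t. add2 p (x i) (scale2 p g t)) ` T i \<inter> (\<lambda>t. add2 p (x j) (scale2 p g t)) ` T j = {}"
    by blast
qed

section \<open>Zero-sum subsets\<close>

lemma exists_subset_sum_in_kernel:
  assumes p: "p > 0" and B: "B \<subseteq> Zp2 p"
    and \<pi>: "\<forall>y\<in>Zp2 p. \<pi> y \<in> Zp p" "\<forall>y\<in>Zp2 p. \<forall>z\<in>Zp2 p. \<pi> (add2 p y z) = addp p (\<pi> y) (\<pi> z)"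
    and ker: "{y \<in> Zp2 p. \<pi> y = 0} = U"
    and sums: "\<forall>z\<in>Zp p. \<exists>S\<subseteq>B. (\<Sum>b\<in>S. \<pi> b) mod p = z"
    and v: "v \<in> Zp2 p"
  obtains S where "S \<subseteq> B" "add2 p (sum2 p S) v \<in> U"
proof -
  have "(- \<pi> v) mod p \<in> Zp p" using p by (simp add: Zp_def)
  then obtain S where S: "S \<subseteq> B" "(\<Sum>b\<in>S. \<pi> b) mod p = (- \<pi> v) mod p"
    using sums by blast
  have "finite (Zp2 p)" by (simp add: Zp2_def Zp_def)
  hence "finite S" using S(1) B by (auto intro: finite_subset)
  hence "\<pi> (sum2 p S) = (- \<pi> v) mod p"
    using hom_sum2[OF p \<pi>] S B by auto
  hence "\<pi> (add2 p (sum2 p S) v) = 0"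
    using \<pi>(2) sum2_Zp2[OF p] v by (simp add: addp_def mod_add_left_eq)
  thus thesis using that S(1) ker add2_Zp2[OF p] by blast
qed

lemma coset_piece_sums_cover_coset:
  fixes I :: "'i::linorder set" and x :: "'i \<Rightarrow> int \<times> int" and p :: int and g :: "int \<times> int"
  assumes p: "prime p" and fI: "finite I"
    and inj: "inj_on (scale2 p g) (Zp p)" and U: "scale2 p g ` Zp p = U"
    and cosets: "\<forall>y\<in>Zp2 p. \<exists>!i. i \<in> I \<and> y \<in> coset2 p (x i) U"
    and big: "nat (p - 1) \<le> (\<Sum>i\<in>I. (N p (x i) U X div 2) * ((N p (x i) U X + 1) div 2))"
  obtains c where "c \<in> Zp2 p" "\<And>\<tau>. \<exists>W\<subseteq>X. W \<noteq> {} \<and> sum2 p W = add2 p c (scale2 p g \<tau>)"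
proof -
  have p0: "p > 0" using p by (simp add: prime_gt_0_int)
  define h where "h i t = add2 p (x i) (scale2 p g t)" for i t
  define Y where "Y i = {t\<in>Zp p. h i t \<in> X}" for i
  define k where "k i = N p (x i) U X div 2" for i
  have card_Y: "card (Y i) = N p (x i) U X" for i
    unfolding Y_def h_def by (rule card_coset_preimage[OF p0 inj U])
  have k_Y: "k i \<le> card (Y i)" "k i * (card (Y i) - k i) =
      (N p (x i) U X div 2) * ((N p (x i) U X + 1) div 2)" for i
    unfolding card_Y k_def by simp_all presburger
  define c where "c = ((\<Sum>i\<in>I. int (k i) * fst (x i)) mod p, (\<Sum>i\<in>I. int (k i) * snd (x i)) mod p)"
  show thesis
  proof (rule that)
    show "c \<in> Zp2 p" using p0 by (simp add: c_def Zp2_def Zp_def)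
    fix \<tau> :: int
    have Y_Zp: "Y i \<subseteq> {0..<p}" for i by (auto simp: Y_def Zp_def)
    have big': "nat (p - 1) \<le> (\<Sum>i\<in>I. k i * (card (Y i) - k i))" using big by (simp add: k_Y)
    then obtain T where T: "\<forall>i\<in>I. T i \<subseteq> Y i \<and> card (T i) = k i"
      and T_sum: "(\<Sum>i\<in>I. \<Sum>t\<in>T i. t) mod p = \<tau> mod p"
      using exists_subsets_sum_mod_prime[where Y = Y and k = k, OF p fI Y_Zp k_Y(1)] by blast
    define W where "W = (\<Union>i\<in>I. h i ` T i)"
    have "W \<subseteq> X" unfolding W_def using T by (force simp: Y_def)
    moreover have "W \<noteq> {}"
    proof -
      obtain i where i: "i \<in> I" "k i \<noteq> 0"
      proof (rule ccontr)
        assume "\<not> thesis"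
        hence "\<forall>i\<in>I. k i = 0" using that by blast
        hence "(\<Sum>i\<in>I. k i * (card (Y i) - k i)) = 0" by simp
        thus False using big' prime_ge_2_int[OF p] by simp
      qed
      hence "T i \<noteq> {}" using T by force
      thus ?thesis using i(1) by (auto simp: W_def)
    qed
    moreover have "sum2 p W = add2 p c (scale2 p g \<tau>)"
    proof -
      have "sum2 p W = add2 p ((\<Sum>i\<in>I. int (card (T i)) * fst (x i)) mod p,
          (\<Sum>i\<in>I. int (card (T i)) * snd (x i)) mod p) (scale2 p g \<tau>)"
        unfolding W_def h_def using T T_sum
        by (intro sum2_transversal_pieces[OF p0 fI inj U cosets]) (auto simp: Y_def)
      moreover have "int (card (T i)) = int (k i)" if "i \<in> I" for i using T that by simp
      ultimately show ?thesis unfolding c_def by (simp cong: sum.cong)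
    qed
    ultimately show "\<exists>W\<subseteq>X. W \<noteq> {} \<and> sum2 p W = add2 p c (scale2 p g \<tau>)"
      by blast
  qed
qed

theorem lemma5:
  fixes p :: int
    and A B U :: "(int \<times> int) set"
    and \<pi> :: "int \<times> int \<Rightarrow> int"
    and x :: "nat \<Rightarrow> int \<times> int"
  assumes "prime p"
    and "A \<subseteq> Zp2 p"
    and "card A = nat p - 1 + Ol p"
    and "is_subgroup2 p U"
    and "iso_to_Zp p U"
    and "B \<subseteq> A"
    and "\<forall>y\<in>Zp2 p. \<pi> y \<in> Zp p"
    and "\<forall>y\<in>Zp2 p. \<forall>z\<in>Zp2 p. \<pi> (add2 p y z) = addp p (\<pi> y) (\<pi> z)"
    and "\<pi> ` Zp2 p = Zp p"
    and "{y \<in> Zp2 p. \<pi> y = 0} = U"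
    and "\<forall>i\<in>{1..nat p}. x i \<in> Zp2 p"
    and "\<forall>y\<in>Zp2 p. \<exists>!i. i \<in> {1..nat p} \<and> y \<in> coset2 p (x i) U"
    and "\<forall>z\<in>Zp p. \<exists>S\<subseteq>B. (\<Sum>b\<in>S. \<pi> b) mod p = z"
    and "(\<Sum>i=1..nat p. (N p (x i) U (A - B) div 2) * ((N p (x i) U (A - B) + 1) div 2))
           \<ge> nat p + 1"
  shows "\<exists>T\<subseteq>A. T \<noteq> {} \<and> sum2 p T = (0, 0)"
proof -
  have p0: "p > 0" and p2: "p \<ge> 2" using assms(1) by (simp_all add: prime_gt_0_int prime_ge_2_int)
  have U: "U \<subseteq> Zp2 p" "\<And>u. u \<in> U \<Longrightarrow> neg2 p u \<in> U"
    using assms(4) by (auto simp: is_subgroup2_def)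
  obtain g where g: "inj_on (scale2 p g) (Zp p)" "scale2 p g ` Zp p = U"
    using iso_to_Zp_imp_scale2[OF p2 U(1) assms(5)] by blast
  have "nat (p - 1) \<le> (\<Sum>i\<in>{1..nat p}. (N p (x i) U (A - B) div 2) * ((N p (x i) U (A - B) + 1) div 2))"
    using assms(14) by linarith
  then obtain c where c: "c \<in> Zp2 p" "\<And>\<tau>. \<exists>W\<subseteq>A - B. W \<noteq> {} \<and> sum2 p W = add2 p c (scale2 p g \<tau>)"
    using coset_piece_sums_cover_coset[OF assms(1) finite_atLeastAtMost g assms(12)] by blast
  obtain S where S: "S \<subseteq> B" "add2 p (sum2 p S) c \<in> U"
    using exists_subset_sum_in_kernel[OF p0 _ assms(7,8,10,13) c(1)] assms(2,6) by blast
  define u where "u = neg2 p (add2 p (sum2 p S) c)"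
  obtain \<tau> where "scale2 p g \<tau> = u" using U(2)[OF S(2)] g(2) by (auto simp: u_def)
  then obtain W where W: "W \<subseteq> A - B" "W \<noteq> {}" "sum2 p W = add2 p c u" using c(2) by metis
  have "finite A" using assms(2) by (rule finite_subset) (simp add: Zp2_def Zp_def)
  hence "finite S" "finite W" using S(1) W(1) assms(6) by (auto intro: finite_subset)
  moreover have "S \<inter> W = {}" using S(1) W(1) by blast
  ultimately have "sum2 p (S \<union> W) = add2 p (sum2 p S) (add2 p c u)"
    by (simp add: sum2_union_disjoint W(3))
  also have "\<dots> = (0, 0)" by (simp add: u_def add2_neg2_right flip: add2_assoc)
  finally show ?thesis using S(1) W assms(6) by (intro exI[of _ "S \<union> W"]) auto
qed

end
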